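(* For any $f:\mathbb{R}^N\to[-\infty,\infty]$, the function $\xi\mapsto \mu_{N}(\overline{B}_{F_{\xi }^{+}})$, where $F^+_\xi:=\{x\in\mathbb{R}^N:f(x)>\xi\}$, is nonincreasing and right-continuous on $[-\infty ,\infty ]$.
   Context: $\mu_N$ is $N$-dimensional Lebesgue measure. For nonempty bounded $X\subset\mathbb{R}^N$, $\overline{B}_X$ is the unique closed ball of minimal diameter containing $X$; $\overline{B}_X:=\mathbb{R}^N$ if $X$ is unbounded; $\overline{B}_\emptyset:=\{0\}$. *)

theory Defs
  imports "HOL-Analysis.Analysis"
begin

text \<open>A closed ball cball c r with r \<ge> 0 has diameter 2r, so minimal diameter
  is minimal radius.\<close>
definition min_encl_ball :: "'a::euclidean_space set \<Rightarrow> 'a set" where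
  "min_encl_ball X =
     (if X = {} then {0}
      else if bounded X then
        (THE B. \<exists>c r. B = cball c r \<and> X \<subseteq> cball c r \<and>
                   (\<forall>c' r'. X \<subseteq> cball c' r' \<longrightarrow> r \<le> r'))
      else UNIV)"

end

theory Submission
  imports Defs
begin

(*
  The minimal enclosing ball of a bounded nonempty set X is cball c (circumradius X): the
  infimal radius is attained because the sets of admissible centres are nested nonempty
  compacta, and the centre is unique because two centres would leave X inside a strictly
  smaller ball around their midpoint.  Hence the measure is unit_ball_vol * circumradius ^ N,
  a monotone function of X, which gives antitonicity.  For right-continuity at \<xi>, the
  superlevel set at \<xi> is the increasing union of those at \<xi>' > \<xi>; if all of them fit into
  balls of one radius s, the nested compact centre sets again have a common point, so the
  union fits into a ball of radius s as well.
*)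

lemma compact_Collect_subset_cball:
  fixes X :: "'a::heine_borel set"
  assumes "X \<noteq> {}"
  shows "compact {c. X \<subseteq> cball c r}"
proof -
  have eq: "{c. X \<subseteq> cball c r} = (\<Inter>x\<in>X. cball x r)"
    by (auto simp: subset_iff dist_commute)
  obtain x where "x \<in> X" using assms by auto
  then have "bounded {c. X \<subseteq> cball c r}"
    by (intro bounded_subset[OF bounded_cball[of x r]]) (auto simp: eq)
  moreover have "closed {c. X \<subseteq> cball c r}"
    unfolding eq by (intro closed_INT) auto
  ultimately show ?thesis
    by (simp add: compact_eq_bounded_closed)
qed

lemma Union_chain_subset_cball:
  fixes \<A> :: "'a::heine_borel set set"
  assumes "{} \<notin> \<A>" and "\<And>A. A \<in> \<A> \<Longrightarrow> \<exists>c. A \<subseteq> cball c r"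
    and chain: "\<And>A B. A \<in> \<A> \<and> B \<in> \<A> \<Longrightarrow> A \<subseteq> B \<or> B \<subseteq> A"
  shows "\<exists>c. \<Union>\<A> \<subseteq> cball c r"
proof -
  have "\<Inter>((\<lambda>A. {c. A \<subseteq> cball c r}) ` \<A>) \<noteq> {}"
  proof (rule compact_chain)
    show "compact K" if "K \<in> (\<lambda>A. {c. A \<subseteq> cball c r}) ` \<A>" for K
      using that assms(1) by (auto intro!: compact_Collect_subset_cball)
    show "{} \<notin> (\<lambda>A. {c. A \<subseteq> cball c r}) ` \<A>"
      using assms(2) by force
    show "K \<subseteq> L \<or> L \<subseteq> K"
      if "K \<in> (\<lambda>A. {c. A \<subseteq> cball c r}) ` \<A> \<and> L \<in> (\<lambda>A. {c. A \<subseteq> cball c r}) ` \<A>" for K L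
    proof -
      from that obtain A B where "A \<in> \<A>" "B \<in> \<A>"
        and "K = {c. A \<subseteq> cball c r}" "L = {c. B \<subseteq> cball c r}"
        by blast
      then show ?thesis
        using chain[of A B] by auto
    qed
  qed
  then show ?thesis
    by blast
qed

definition circumradius :: "'a::metric_space set \<Rightarrow> real" where
  "circumradius X = Inf {r. \<exists>c. X \<subseteq> cball c r}"

lemma radius_nonneg_if_subset_cball:
  assumes "X \<subseteq> cball c r" "X \<noteq> {}"
  shows "0 \<le> r"
  using assms cball_eq_empty[of c r] by auto

lemma circumradius_le:
  assumes "X \<subseteq> cball c r" "X \<noteq> {}"
  shows "circumradius X \<le> r"
  unfolding circumradius_def
  using assms radius_nonneg_if_subset_cball by (intro cInf_lower bdd_belowI[of _ 0]) blast+

lemma circumradius_attained: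
  fixes X :: "'a::heine_borel set"
  assumes "bounded X" "X \<noteq> {}"
  obtains c where "X \<subseteq> cball c (circumradius X)"
proof -
  define R where "R = {r. \<exists>c. X \<subseteq> cball c r}"
  have "R \<noteq> {}"
    using assms(1) unfolding R_def bounded_subset_cball by blast
  have "\<Inter>((\<lambda>r. {c. X \<subseteq> cball c r}) ` R) \<noteq> {}"
  proof (rule compact_chain)
    show "compact K" if "K \<in> (\<lambda>r. {c. X \<subseteq> cball c r}) ` R" for K
      using that assms(2) by (auto intro!: compact_Collect_subset_cball)
    show "{} \<notin> (\<lambda>r. {c. X \<subseteq> cball c r}) ` R"
      unfolding R_def by force
    show "K \<subseteq> L \<or> L \<subseteq> K"
      if "K \<in> (\<lambda>r. {c. X \<subseteq> cball c r}) ` R \<and> L \<in> (\<lambda>r. {c. X \<subseteq> cball c r}) ` R" for K L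
    proof -
      from that obtain r s where "K = {c. X \<subseteq> cball c r}" "L = {c. X \<subseteq> cball c s}"
        by blast
      moreover have "{c. X \<subseteq> cball c r} \<subseteq> {c. X \<subseteq> cball c s}" if "r \<le> s" for r s
        using that subset_cball by blast
      ultimately show ?thesis
        by (meson le_cases)
    qed
  qed
  then obtain c where c: "\<And>r. r \<in> R \<Longrightarrow> X \<subseteq> cball c r"
    by blast
  have "dist c x \<le> circumradius X" if "x \<in> X" for x
    unfolding circumradius_def R_def[symmetric]
    using c that \<open>R \<noteq> {}\<close> by (intro cInf_greatest) (auto simp: subset_iff)
  then show thesis
    by (intro that) auto
qed

lemma circumradius_nonneg:
  fixes X :: "'a::heine_borel set"
  assumes "bounded X" "X \<noteq> {}"
  shows "0 \<le> circumradius X"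
  by (rule circumradius_attained[OF assms]) (rule radius_nonneg_if_subset_cball[OF _ assms(2)])

lemma dist_midpoint_power2:
  fixes x a b :: "'a::real_inner"
  shows "(dist x (midpoint a b))\<^sup>2 = ((dist x a)\<^sup>2 + (dist x b)\<^sup>2) / 2 - (dist a b)\<^sup>2 / 4"
  unfolding dist_norm midpoint_def power2_norm_eq_inner
  by (simp add: inner_add_left inner_add_right inner_diff_left inner_diff_right inner_commute
      field_simps)

lemma circumcentre_unique:
  fixes X :: "'a::real_inner set"
  assumes "X \<noteq> {}" "X \<subseteq> cball a (circumradius X)" "X \<subseteq> cball b (circumradius X)"
  shows "a = b"
proof -
  define r where "r = circumradius X"
  have close: "(dist x (midpoint a b))\<^sup>2 \<le> r\<^sup>2 - (dist a b)\<^sup>2 / 4" if "x \<in> X" for x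
  proof -
    have "dist x a \<le> r" "dist x b \<le> r"
      using that assms(2,3) by (auto simp: r_def dist_commute)
    then have "(dist x a)\<^sup>2 \<le> r\<^sup>2" "(dist x b)\<^sup>2 \<le> r\<^sup>2"
      by (simp_all add: power_mono)
    then show ?thesis
      unfolding dist_midpoint_power2 by simp
  qed
  have "X \<subseteq> cball (midpoint a b) (sqrt (r\<^sup>2 - (dist a b)\<^sup>2 / 4))"
    using close by (auto simp: dist_commute intro!: real_le_rsqrt)
  then have "r \<le> sqrt (r\<^sup>2 - (dist a b)\<^sup>2 / 4)"
    using circumradius_le assms(1) r_def by blast
  moreover have "0 \<le> r"
    using radius_nonneg_if_subset_cball assms(1,2) r_def by blast
  ultimately have "r\<^sup>2 \<le> r\<^sup>2 - (dist a b)\<^sup>2 / 4"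
    by (intro sqrt_ge_absD) simp
  then show "a = b"
    by simp
qed

lemma min_encl_ball_eq_cball:
  fixes X :: "'a::euclidean_space set"
  assumes "bounded X" "X \<noteq> {}" "X \<subseteq> cball c (circumradius X)"
  shows "min_encl_ball X = cball c (circumradius X)"
proof -
  have "(THE B. \<exists>c r. B = cball c r \<and> X \<subseteq> cball c r \<and>
                   (\<forall>c' r'. X \<subseteq> cball c' r' \<longrightarrow> r \<le> r')) = cball c (circumradius X)"
  proof (rule the_equality)
    show "\<exists>c' r. cball c (circumradius X) = cball c' r \<and> X \<subseteq> cball c' r \<and>
                (\<forall>c'' r'. X \<subseteq> cball c'' r' \<longrightarrow> r \<le> r')"
      using assms(2,3) circumradius_le by blast
  next
    fix B
    assume "\<exists>c' r. B = cball c' r \<and> X \<subseteq> cball c' r \<and> (\<forall>c'' r'. X \<subseteq> cball c'' r' \<longrightarrow> r \<le> r')"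
    then obtain c' r where B: "B = cball c' r" "X \<subseteq> cball c' r"
      and minimal: "\<And>c'' r'. X \<subseteq> cball c'' r' \<Longrightarrow> r \<le> r'"
      by blast
    have "r = circumradius X"
      using minimal[OF assms(3)] circumradius_le[OF B(2) assms(2)] by linarith
    then have "c' = c"
      using circumcentre_unique[OF assms(2)] B(2) assms(3) by blast
    then show "B = cball c (circumradius X)"
      using B(1) \<open>r = circumradius X\<close> by simp
  qed
  then show ?thesis
    using assms(1,2) by (simp add: min_encl_ball_def)
qed

lemma emeasure_min_encl_ball:
  fixes X :: "'a::euclidean_space set"
  assumes "bounded X" "X \<noteq> {}"
  shows "emeasure lebesgue (min_encl_ball X) = ennreal (unit_ball_vol DIM('a) * circumradius X ^ DIM('a))"
proof -
  obtain c where "X \<subseteq> cball c (circumradius X)"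
    using circumradius_attained[OF assms] .
  then show ?thesis
    using min_encl_ball_eq_cball[OF assms] circumradius_nonneg[OF assms]
    by (simp add: emeasure_cball)
qed

lemma emeasure_min_encl_ball_empty [simp]:
  "emeasure lebesgue (min_encl_ball ({} :: 'a::euclidean_space set)) = 0"
  by (simp add: min_encl_ball_def)

lemma emeasure_min_encl_ball_unbounded:
  "\<not> bounded X \<Longrightarrow> emeasure lebesgue (min_encl_ball X) = \<infinity>"
  by (auto simp: min_encl_ball_def)

lemma emeasure_min_encl_ball_le_iff:
  fixes X :: "'a::euclidean_space set"
  assumes "bounded X" "X \<noteq> {}" "0 \<le> s"
  shows "emeasure lebesgue (min_encl_ball X) \<le> ennreal (unit_ball_vol DIM('a) * s ^ DIM('a))
           \<longleftrightarrow> circumradius X \<le> s"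
  using assms circumradius_nonneg[OF assms(1,2)]
  by (simp add: emeasure_min_encl_ball ennreal_le_iff mult_le_cancel_left_pos power_mono_iff)

lemma circumradius_mono:
  fixes Y :: "'a::heine_borel set"
  assumes "X \<subseteq> Y" "X \<noteq> {}" "bounded Y"
  shows "circumradius X \<le> circumradius Y"
proof -
  obtain c where "Y \<subseteq> cball c (circumradius Y)"
    using circumradius_attained assms by blast
  then show ?thesis
    using circumradius_le assms(1,2) by blast
qed

lemma emeasure_min_encl_ball_mono:
  fixes Y :: "'a::euclidean_space set"
  assumes "X \<subseteq> Y"
  shows "emeasure lebesgue (min_encl_ball X) \<le> emeasure lebesgue (min_encl_ball Y)"
proof (cases "X = {} \<or> \<not> bounded Y")
  case True
  then show ?thesis
    by (auto simp: emeasure_min_encl_ball_unbounded)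
next
  case False
  then have "bounded X" "X \<noteq> {}" "bounded Y" "Y \<noteq> {}"
    using assms bounded_subset by auto
  then show ?thesis
    using circumradius_mono[OF assms] circumradius_nonneg[of Y]
    by (simp add: emeasure_min_encl_ball_le_iff emeasure_min_encl_ball[of Y])
qed

lemma emeasure_min_encl_ball_Union_chain_le:
  fixes \<A> :: "'a::euclidean_space set set"
  assumes chain: "\<And>A B. A \<in> \<A> \<and> B \<in> \<A> \<Longrightarrow> A \<subseteq> B \<or> B \<subseteq> A"
    and le: "\<And>A. A \<in> \<A> \<Longrightarrow> emeasure lebesgue (min_encl_ball A) \<le> l"
  shows "emeasure lebesgue (min_encl_ball (\<Union>\<A>)) \<le> l"
proof (cases "l = \<infinity>")
  case True
  then show ?thesis
    by simp
next
  case False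
  define V where "V = unit_ball_vol DIM('a)"
  define s where "s = root DIM('a) (enn2real l / V)"
  have "0 < V"
    by (simp add: V_def)
  then have "0 \<le> s"
    by (simp add: s_def)
  have l_eq: "l = ennreal (V * s ^ DIM('a))"
    using False \<open>0 < V\<close> by (simp add: s_def real_root_pow_pos2 ennreal_enn2real_if)
  have "\<exists>c. A \<subseteq> cball c s" if "A \<in> \<A> - {{}}" for A
  proof -
    have "A \<noteq> {}" and A_le: "emeasure lebesgue (min_encl_ball A) \<le> l"
      using that le by auto
    moreover have "bounded A"
    proof (rule ccontr)
      assume "\<not> bounded A"
      then have "l = \<infinity>"
        using A_le by (simp add: emeasure_min_encl_ball_unbounded top_unique)
      with False show False ..
    qed
    ultimately have "circumradius A \<le> s"
      using emeasure_min_encl_ball_le_iff[of A s] \<open>0 \<le> s\<close> l_eq by (simp add: V_def)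
    moreover obtain c where "A \<subseteq> cball c (circumradius A)"
      using circumradius_attained \<open>bounded A\<close> \<open>A \<noteq> {}\<close> by blast
    ultimately show ?thesis
      using subset_cball[of "circumradius A" s c] by blast
  qed
  then obtain c where "\<Union>(\<A> - {{}}) \<subseteq> cball c s"
    using Union_chain_subset_cball[of "\<A> - {{}}" s] chain by auto
  then have c: "\<Union>\<A> \<subseteq> cball c s"
    by auto
  show ?thesis
  proof (cases "\<Union>\<A> = {}")
    case True
    then show ?thesis
      by (metis emeasure_min_encl_ball_empty zero_le)
  next
    case False
    have "bounded (\<Union>\<A>)"
      using c bounded_subset bounded_cball by blast
    moreover have "circumradius (\<Union>\<A>) \<le> s"
      using circumradius_le[OF c False] .
    ultimately show ?thesis
      using emeasure_min_encl_ball_le_iff[of "\<Union>\<A>" s] False \<open>0 \<le> s\<close> l_eq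
      by (simp add: V_def)
  qed
qed

lemma Union_superlevel_sets:
  fixes f :: "'a \<Rightarrow> 'b::dense_linorder"
  shows "(\<Union>\<xi>\<in>{\<xi>0<..}. {x. \<xi> < f x}) = {x. \<xi>0 < f x}"
  by (auto intro: less_trans) (meson dense greaterThan_iff)

lemma superlevel_sets_nested:
  fixes f :: "'a \<Rightarrow> 'b::linorder"
  shows "{x. a < f x} \<subseteq> {x. b < f x} \<or> {x. b < f x} \<subseteq> {x. a < f x}"
  using le_less_trans by (cases "a \<le> b") (auto simp: not_le)

lemma antimono_continuous_at_right:
  fixes \<phi> :: "'a::linorder_topology \<Rightarrow> 'b::linorder_topology"
  assumes "antimono \<phi>"
    and sup: "\<And>l. (\<And>\<xi>. \<xi>0 < \<xi> \<Longrightarrow> \<phi> \<xi> \<le> l) \<Longrightarrow> \<phi> \<xi>0 \<le> l"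
  shows "continuous (at_right \<xi>0) \<phi>"
  unfolding continuous_within order_tendsto_iff
proof (intro conjI allI impI)
  fix u assume "\<phi> \<xi>0 < u"
  then have "\<phi> y < u" if "\<xi>0 < y" for y
    using antimonoD[OF assms(1), of \<xi>0 y] that by (meson le_less_trans less_imp_le)
  then show "eventually (\<lambda>y. \<phi> y < u) (at_right \<xi>0)"
    by (simp add: eventually_at_filter)
next
  fix l assume "l < \<phi> \<xi>0"
  then obtain \<xi>1 where "\<xi>0 < \<xi>1" "l < \<phi> \<xi>1"
    using sup[of l] by (meson not_le)
  then show "eventually (\<lambda>y. l < \<phi> y) (at_right \<xi>0)"
    using antimonoD[OF assms(1)]
    by (intro eventually_at_rightI[where b=\<xi>1]) (auto intro: less_le_trans)
qed

theorem lemma10: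
  fixes f :: "'a::euclidean_space \<Rightarrow> ereal"
  defines "\<phi> \<equiv> (\<lambda>\<xi>::ereal. emeasure lebesgue (min_encl_ball {x. f x > \<xi>}))"
  shows "antimono \<phi> \<and> (\<forall>\<xi>. continuous (at_right \<xi>) \<phi>)"
proof
  show anti: "antimono \<phi>"
    unfolding \<phi>_def by (intro antimonoI emeasure_min_encl_ball_mono) (auto intro: le_less_trans)
  show "\<forall>\<xi>. continuous (at_right \<xi>) \<phi>"
  proof
    fix \<xi>0
    show "continuous (at_right \<xi>0) \<phi>"
    proof (rule antimono_continuous_at_right[OF anti])
      fix l
      assume "\<And>\<xi>. \<xi>0 < \<xi> \<Longrightarrow> \<phi> \<xi> \<le> l"
      then have "emeasure lebesgue (min_encl_ball (\<Union>\<xi>\<in>{\<xi>0<..}. {x. \<xi> < f x})) \<le> l"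
        unfolding \<phi>_def
        by (intro emeasure_min_encl_ball_Union_chain_le) (auto simp: superlevel_sets_nested)
      then show "\<phi> \<xi>0 \<le> l"
        by (simp add: \<phi>_def Union_superlevel_sets)
    qed
  qed
qed

end
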